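(* Let $T$ be a tournament and let $X,M\subseteq V(T)$ be such that $X$ dominates $T$. Then $T$ is $M$-sparse if and only if $T[X]$ is $(M\cap X)$-sparse and $T-X$ is $(M\setminus X)$-sparse.
   Context: A tournament is a digraph with exactly one arc between each pair of distinct vertices; $T[X]$ is the subtournament induced by $X$ and $T-X$ the one induced by $V(T)\setminus X$. $X$ dominates $T$ if $(x,y)\in A(T)$ for every $x\in X$ and every $y\in V(T)\setminus X$. For an ordering $\sigma$ of the vertices of a tournament, an arc $(x,y)$ is backward if $y$ precedes $x$, and $d_\sigma(v)$ is the number of backward arcs incident to $v$. For a tournament $S$ and $N\subseteq V(S)$, $S$ is $N$-sparse if there is an ordering $\sigma$ of $V(S)$ with $d_\sigma(v)\le1$ for all $v\in V(S)$ and $d_\sigma(v)=0$ for all $v\in N$. *)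

theory Defs
  imports Main
begin

definition tournament :: "'a set \<Rightarrow> ('a \<times> 'a) set \<Rightarrow> bool" where
  "tournament V A \<longleftrightarrow> finite V \<and> A \<subseteq> V \<times> V \<and> (\<forall>x\<in>V. (x, x) \<notin> A) \<and>
     (\<forall>x\<in>V. \<forall>y\<in>V. x \<noteq> y \<longrightarrow> ((x, y) \<in> A \<longleftrightarrow> (y, x) \<notin> A))"

definition induced_arcs :: "('a \<times> 'a) set \<Rightarrow> 'a set \<Rightarrow> ('a \<times> 'a) set" where
  "induced_arcs A X = A \<inter> (X \<times> X)"

definition dominates :: "'a set \<Rightarrow> ('a \<times> 'a) set \<Rightarrow> 'a set \<Rightarrow> bool" where
  "dominates V A X \<longleftrightarrow> (\<forall>x\<in>X. \<forall>y\<in>V - X. (x, y) \<in> A)"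

definition is_ordering :: "'a set \<Rightarrow> 'a list \<Rightarrow> bool" where
  "is_ordering V \<sigma> \<longleftrightarrow> distinct \<sigma> \<and> set \<sigma> = V"

definition precedes :: "'a list \<Rightarrow> 'a \<Rightarrow> 'a \<Rightarrow> bool" where
  "precedes \<sigma> y x \<longleftrightarrow> (\<exists>i j. i < j \<and> j < length \<sigma> \<and> \<sigma> ! i = y \<and> \<sigma> ! j = x)"

definition backward_arcs :: "'a list \<Rightarrow> ('a \<times> 'a) set \<Rightarrow> ('a \<times> 'a) set" where
  "backward_arcs \<sigma> A = {(x, y) \<in> A. precedes \<sigma> y x}"

definition back_deg :: "'a list \<Rightarrow> ('a \<times> 'a) set \<Rightarrow> 'a \<Rightarrow> nat" where
  "back_deg \<sigma> A v = card {e \<in> backward_arcs \<sigma> A. fst e = v \<or> snd e = v}"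

definition sparse :: "'a set \<Rightarrow> ('a \<times> 'a) set \<Rightarrow> 'a set \<Rightarrow> bool" where
  "sparse V A N \<longleftrightarrow> (\<exists>\<sigma>. is_ordering V \<sigma> \<and>
     (\<forall>v\<in>V. back_deg \<sigma> A v \<le> 1) \<and> (\<forall>v\<in>N. back_deg \<sigma> A v = 0))"

end

theory Submission
  imports Defs
begin

(* Restricting an ordering of V to a subset Y keeps only backward arcs of the original ordering,
   so sparsity passes to induced subtournaments. Conversely, when X dominates T, every arc between
   X and V - X points from X to V - X; so listing an ordering of X before one of V - X creates no
   new backward arc, and every vertex keeps its backward degree. *)

lemma precedes_iff_split: "precedes s y x \<longleftrightarrow> (\<exists>us ws. s = us @ y # ws \<and> x \<in> set ws)"
proof
  assume "precedes s y x"
  then obtain i j where ij: "i < j" "j < length s" "s ! i = y" "s ! j = x"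
    unfolding precedes_def by blast
  have "s = take i s @ y # drop (Suc i) s"
    using ij by (metis id_take_nth_drop order.strict_trans)
  moreover have "x \<in> set (drop (Suc i) s)"
    using ij by (auto simp: in_set_conv_nth intro!: exI[of _ "j - Suc i"])
  ultimately show "\<exists>us ws. s = us @ y # ws \<and> x \<in> set ws" by blast
next
  assume "\<exists>us ws. s = us @ y # ws \<and> x \<in> set ws"
  then obtain us ws k where "s = us @ y # ws" "k < length ws" "ws ! k = x"
    by (auto simp: in_set_conv_nth)
  then show "precedes s y x"
    unfolding precedes_def
    by (intro exI[of _ "length us"] exI[of _ "length us + Suc k"]) (simp add: nth_append)
qed

lemma precedes_Nil [simp]: "\<not> precedes [] y x"
  by (simp add: precedes_def)

lemma precedes_Cons: "precedes (a # s) y x \<longleftrightarrow> (a = y \<and> x \<in> set s) \<or> precedes s y x"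
  by (auto simp: precedes_iff_split Cons_eq_append_conv)

lemma precedes_in_set: "precedes s y x \<Longrightarrow> y \<in> set s \<and> x \<in> set s"
  by (auto simp: precedes_iff_split)

lemma precedes_append:
  "precedes (s @ t) y x \<longleftrightarrow> precedes s y x \<or> precedes t y x \<or> (y \<in> set s \<and> x \<in> set t)"
  by (induction s) (auto simp: precedes_Cons)

lemma precedes_filter: "precedes (filter P s) y x \<longleftrightarrow> P y \<and> P x \<and> precedes s y x"
  by (induction s) (auto simp: precedes_Cons dest: precedes_in_set)

lemma backward_arcs_subset: "backward_arcs s A \<subseteq> set s \<times> set s"
  by (auto simp: backward_arcs_def dest: precedes_in_set)

lemma back_deg_mono:
  assumes "backward_arcs s A \<subseteq> backward_arcs t B"
  shows "back_deg s A v \<le> back_deg t B v"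
  unfolding back_deg_def
proof (rule card_mono)
  show "finite {e \<in> backward_arcs t B. fst e = v \<or> snd e = v}"
    using backward_arcs_subset[of t B] by (auto intro: finite_subset)
qed (use assms in auto)

lemma backward_arcs_filter_induced:
  "backward_arcs (filter (\<lambda>v. v \<in> Y) s) (induced_arcs A Y) \<subseteq> backward_arcs s A"
  by (auto simp: backward_arcs_def induced_arcs_def precedes_filter)

lemma sparse_induced:
  assumes "sparse V A N" and "Y \<subseteq> V"
  shows "sparse Y (induced_arcs A Y) (N \<inter> Y)"
proof -
  obtain s where s: "is_ordering V s" "\<forall>v\<in>V. back_deg s A v \<le> 1" "\<forall>v\<in>N. back_deg s A v = 0"
    using assms(1) unfolding sparse_def by blast
  let ?t = "filter (\<lambda>v. v \<in> Y) s"
  have "is_ordering Y ?t"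
    using s(1) assms(2) unfolding is_ordering_def by auto
  moreover have le: "back_deg ?t (induced_arcs A Y) v \<le> back_deg s A v" for v
    by (rule back_deg_mono[OF backward_arcs_filter_induced])
  moreover have "\<forall>v\<in>Y. back_deg ?t (induced_arcs A Y) v \<le> 1"
    using s(2) assms(2) le order.trans by blast
  moreover have "\<forall>v\<in>N \<inter> Y. back_deg ?t (induced_arcs A Y) v = 0"
    using s(3) le by (metis IntD1 le_zero_eq)
  ultimately show ?thesis
    unfolding sparse_def by blast
qed

lemma backward_arcs_append:
  assumes "\<And>x y. x \<in> set t \<Longrightarrow> y \<in> set s \<Longrightarrow> (x, y) \<notin> A"
  shows "backward_arcs (s @ t) A =
    backward_arcs s (induced_arcs A (set s)) \<union> backward_arcs t (induced_arcs A (set t))"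
  using assms
  by (auto simp: backward_arcs_def induced_arcs_def precedes_append dest: precedes_in_set)

lemma back_deg_append:
  assumes "set s \<inter> set t = {}"
    and "\<And>x y. x \<in> set t \<Longrightarrow> y \<in> set s \<Longrightarrow> (x, y) \<notin> A"
  shows "v \<in> set s \<Longrightarrow> back_deg (s @ t) A v = back_deg s (induced_arcs A (set s)) v"
    and "v \<in> set t \<Longrightarrow> back_deg (s @ t) A v = back_deg t (induced_arcs A (set t)) v"
  using assms backward_arcs_subset[of s "induced_arcs A (set s)"]
    backward_arcs_subset[of t "induced_arcs A (set t)"]
  by (auto simp: back_deg_def backward_arcs_append intro!: arg_cong[where f = card])

lemma sparse_Un:
  assumes "sparse X (induced_arcs A X) N" and "N \<subseteq> X"
    and "sparse Y (induced_arcs A Y) N'" and "N' \<subseteq> Y"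
    and "X \<inter> Y = {}" and "\<And>x y. x \<in> Y \<Longrightarrow> y \<in> X \<Longrightarrow> (x, y) \<notin> A"
  shows "sparse (X \<union> Y) A (N \<union> N')"
proof -
  obtain s where s: "is_ordering X s" "\<forall>v\<in>X. back_deg s (induced_arcs A X) v \<le> 1"
      "\<forall>v\<in>N. back_deg s (induced_arcs A X) v = 0"
    using assms(1) unfolding sparse_def by blast
  obtain t where t: "is_ordering Y t" "\<forall>v\<in>Y. back_deg t (induced_arcs A Y) v \<le> 1"
      "\<forall>v\<in>N'. back_deg t (induced_arcs A Y) v = 0"
    using assms(3) unfolding sparse_def by blast
  have sets: "set s = X" "set t = Y"
    using s(1) t(1) unfolding is_ordering_def by auto
  have "is_ordering (X \<union> Y) (s @ t)"
    using s(1) t(1) assms(5) unfolding is_ordering_def by auto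
  moreover note back_deg_append[of s t A, unfolded sets, OF assms(5,6)]
  ultimately show ?thesis
    unfolding sparse_def using s(2,3) t(2,3) assms(2,4) by (intro exI[of _ "s @ t"]) auto
qed

lemma dominates_no_arc_into:
  assumes "tournament V A" and "dominates V A X" and "X \<subseteq> V"
    and "x \<in> V - X" and "y \<in> X"
  shows "(x, y) \<notin> A"
proof -
  have "(y, x) \<in> A"
    using assms(2,4,5) unfolding dominates_def by blast
  moreover have "x \<noteq> y" "y \<in> V"
    using assms(3-5) by auto
  ultimately show ?thesis
    using assms(1,4) unfolding tournament_def by blast
qed

theorem mainTheorem13:
  fixes V X M :: "'a set" and A :: "('a \<times> 'a) set"
  assumes "tournament V A"
    and "X \<subseteq> V" and "M \<subseteq> V"
    and "dominates V A X"
  shows "sparse V A M \<longleftrightarrow>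
           sparse X (induced_arcs A X) (M \<inter> X) \<and>
           sparse (V - X) (induced_arcs A (V - X)) (M - X)"
proof
  assume "sparse V A M"
  moreover have "M - X = M \<inter> (V - X)"
    using assms(3) by blast
  ultimately show "sparse X (induced_arcs A X) (M \<inter> X) \<and>
      sparse (V - X) (induced_arcs A (V - X)) (M - X)"
    using sparse_induced assms(2) by (metis Diff_subset)
next
  assume "sparse X (induced_arcs A X) (M \<inter> X) \<and>
      sparse (V - X) (induced_arcs A (V - X)) (M - X)"
  then have "sparse (X \<union> (V - X)) A (M \<inter> X \<union> (M - X))"
    using dominates_no_arc_into[OF assms(1,4,2)] assms(3)
    by (intro sparse_Un) auto
  moreover have "X \<union> (V - X) = V" "M \<inter> X \<union> (M - X) = M"
    using assms(2) by auto
  ultimately show "sparse V A M"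
    by simp
qed

end
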